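(* Let $t_0>0$, $\nu\ge1$, and let $P(t)=p_\nu(t-t_0)^{\nu-1}+\cdots+p_2(t-t_0)+p_1$ be a polynomial with complex coefficients and $p_\nu\neq0$. Then there exists a tame power series $\alpha$ with $B_\alpha[\nu-1;t]=P(t)$. Moreover, all tame power series $\alpha$ with pole order $\nu$ at $z=1$ and $B_\alpha[\nu-1;t]=P(t)$ have the same principal part at $z=1$, and for each of them $$B_\alpha[\nu-n;t_0]=\frac{(n-1)!}{(\nu-1)^{\underline{n-1}}}\,p_n,\qquad 1\le n\le\nu,$$ where $(\nu-1)^{\underline{n-1}}=(\nu-1)(\nu-2)\cdots(\nu-n+1)$ (equal to $1$ when $n=1$).
   Context: A power series $\alpha(z)=\sum_{n\ge0}a_{n+1}z^n$ is tame if it converges on the open unit disk, extends holomorphically to a punctured neighborhood of $z=1$ with a pole of order $\nu\ge0$ at $1$ ($\nu=0$ meaning holomorphic at $1$), and $(z-1)^\nu\alpha(z)$ equals, on an open neighborhood of $(0,1]$, a multi-power series $\sum_{\mathbf i\in\mathbb Z^N_{\ge0}}c_{\mathbf i}\prod_{j=1}^N(z^{e_j}-1)^{i_j}$ (some $N\ge1$, $e_j\in\mathbb Z_{>0}$) converging absolutely and uniformly there. The principal part at $z=1$ is the polar part $\sum_{n=1}^\nu k_n(z-1)^{-n}$ of the Laurent expansion. Bernoulli polynomials of a tame $\alpha$ with pole order $\nu$: $\sum_{n\ge0}B_\alpha[n;t]\frac{u^n}{n!}=(-u)^\nu\alpha(e^u)e^{tu}$ near $u=0$. *)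

theory Defs
  imports "HOL-Complex_Analysis.Complex_Analysis"
begin

text \<open>A power series alpha(z) = sum_n a n * z^n is represented by its coefficient
  sequence a (a n is the paper's a_(n+1)).  F is its holomorphic continuation.\<close>

definition multi_index_set :: "nat \<Rightarrow> (nat \<Rightarrow> nat) set" where
  "multi_index_set N = {i. \<forall>j\<ge>N. i j = 0}"

definition multi_term ::
  "nat \<Rightarrow> (nat \<Rightarrow> nat) \<Rightarrow> ((nat \<Rightarrow> nat) \<Rightarrow> complex) \<Rightarrow> (nat \<Rightarrow> nat) \<Rightarrow> complex \<Rightarrow> complex" where
  "multi_term N e c i z = c i * (\<Prod>j<N. (z ^ e j - 1) ^ i j)"

definition tame_cont :: "(nat \<Rightarrow> complex) \<Rightarrow> (complex \<Rightarrow> complex) \<Rightarrow> nat \<Rightarrow> bool" where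
  "tame_cont a F \<nu> \<longleftrightarrow>
     (\<forall>z. norm z < 1 \<longrightarrow> summable (\<lambda>n. a n * z ^ n)) \<and>
     (\<forall>z. norm z < 1 \<longrightarrow> F z = (\<Sum>n. a n * z ^ n)) \<and>
     (\<exists>r>0. F holomorphic_on (ball 0 1 \<union> (ball 1 r - {1})) \<and>
       (\<exists>h. h holomorphic_on ball 1 r \<and>
            (\<forall>z\<in>ball 1 r - {1}. h z = (z - 1) ^ \<nu> * F z) \<and>
            (\<nu> > 0 \<longrightarrow> h 1 \<noteq> 0) \<and>
            (\<exists>U N e c. open U \<and> complex_of_real ` {0<..1} \<subseteq> U \<and>
                U \<subseteq> ball 0 1 \<union> ball 1 r \<and> N \<ge> 1 \<and> (\<forall>j<N. e j > 0) \<and>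
                (\<forall>z\<in>U. (\<lambda>i. norm (multi_term N e c i z)) summable_on multi_index_set N) \<and>
                uniform_limit U (\<lambda>X z. \<Sum>i\<in>X. multi_term N e c i z)
                  (\<lambda>z. if z = 1 then h 1 else (z - 1) ^ \<nu> * F z)
                  (finite_subsets_at_top (multi_index_set N)))))"

definition tame_bernoulli :: "(complex \<Rightarrow> complex) \<Rightarrow> nat \<Rightarrow> nat \<Rightarrow> complex \<Rightarrow> complex" where
  "tame_bernoulli F \<nu> n t =
     (THE B. \<exists>r>0. \<forall>u. 0 < norm u \<and> norm u < r \<longrightarrow>
        (\<lambda>k. B k * u ^ k / fact k) sums ((- u) ^ \<nu> * F (exp u) * exp (t * u))) n"

definition principal_part :: "(complex \<Rightarrow> complex) \<Rightarrow> nat \<Rightarrow> complex \<Rightarrow> complex" where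
  "principal_part F \<nu> z =
     (\<Sum>n=1..\<nu>. fls_nth (laurent_expansion F 1) (- int n) * (z - 1) powi (- int n))"

end

theory Submission
  imports Defs
begin

text \<open>For a tame \<alpha> with pole order \<nu> at 1, the function \<phi>(u) = (-u)^\<nu> \<alpha>(e^u) has a removable
  singularity at u = 0 and B[n;t] = n! [u^n] \<phi>(u) e^(tu). Hence the B[n;t] form an Appell
  sequence, B[m;t] = \<Sum>i\<le>m. (m choose i) B[i;t0] (t - t0)^(m-i); comparing coefficients with P
  gives the values B[\<nu>-n;t0] and shows that B[\<nu>-1;t] determines the Taylor coefficients of \<phi>
  below u^\<nu>. If two such series share them, the difference of their \<phi>'s is u^\<nu> times a
  holomorphic function, so after substituting u = Ln z the difference of the series is holomorphic
  at z = 1 and the principal parts agree.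

  For existence take \<alpha>(z) = q(z) / (z - 1)^\<nu> with q a polynomial in z - 1. Then
  \<phi>(u) = (-1)^\<nu> q(e^u) (u / (e^u - 1))^\<nu>, and inverting the series e^u - 1 yields coefficients
  of q for which \<phi> has the prescribed first \<nu> Taylor coefficients; p \<nu> \<noteq> 0 makes q(1) \<noteq> 0,
  so the pole has order exactly \<nu>.\<close>

section \<open>Formal power series\<close>

lemma fps_mult_nth_cong_prefix:
  fixes f g h :: "'a::comm_semiring_1 fps"
  assumes "\<And>i. i \<le> n \<Longrightarrow> f $ i = g $ i"
  shows "(f * h) $ n = (g * h) $ n"
  using assms by (simp add: fps_mult_nth)

lemma fps_divide_nth_prefix:
  fixes Q T W :: "'a::field fps"
  assumes "W $ 0 \<noteq> 0" and "\<And>i. i \<le> n \<Longrightarrow> Q $ i = (T * W) $ i"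
  shows "(Q / W) $ n = T $ n"
proof -
  have "(Q / W) $ n = (Q * inverse W) $ n"
    using assms(1) by (simp add: fps_divide_unit)
  also have "\<dots> = (T * W * inverse W) $ n"
    by (rule fps_mult_nth_cong_prefix) (rule assms(2))
  also have "T * W * inverse W = T"
    using assms(1) by (simp add: mult.assoc inverse_mult_eq_1')
  finally show ?thesis .
qed

lemma fact_fps_mult_exp_nth_shift:
  fixes \<Phi> :: "'a::field_char_0 fps"
  shows "fact m * (\<Phi> * fps_exp t) $ m =
     (\<Sum>i\<le>m. of_nat (m choose i) * (fact i * (\<Phi> * fps_exp t0) $ i) * (t - t0) ^ (m - i))"
proof -
  have "\<Phi> * fps_exp t = (\<Phi> * fps_exp t0) * fps_exp (t - t0)"
    by (simp add: mult.assoc flip: fps_exp_add_mult)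
  hence "fact m * (\<Phi> * fps_exp t) $ m
      = (\<Sum>i\<le>m. fact m * ((\<Phi> * fps_exp t0) $ i * ((t - t0) ^ (m - i) / fact (m - i))))"
    by (simp only: fps_mult_nth[of "\<Phi> * fps_exp t0"] fps_exp_nth of_nat_fact atLeast0AtMost
        sum_distrib_left)
  also have "\<dots> = (\<Sum>i\<le>m. of_nat (m choose i) * (fact i * (\<Phi> * fps_exp t0) $ i) * (t - t0) ^ (m - i))"
    by (intro sum.cong refl) (simp add: binomial_fact field_simps)
  finally show ?thesis .
qed

lemma fps_exp_minus_1_poly_prefix:
  fixes T :: "'a::field_char_0 fps"
  obtains c where "\<And>n. n \<le> d \<Longrightarrow> (\<Sum>m\<le>d. fps_const (c m) * (fps_exp 1 - 1) ^ m) $ n = T $ n"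
proof
  define E where "E = (fps_exp 1 - 1 :: 'a fps)"
  have E0: "E $ 0 = 0" by (simp add: E_def)
  have ginv: "fps_ginv T E oo E = T"
    by (rule fps_ginv) (simp_all add: E_def)
  fix n assume "n \<le> d"
  have "(\<Sum>m\<le>d. fps_const (fps_ginv T E $ m) * E ^ m) $ n = (\<Sum>m\<le>d. fps_ginv T E $ m * (E ^ m) $ n)"
    by (simp add: fps_sum_nth)
  also have "\<dots> = (\<Sum>m=0..n. fps_ginv T E $ m * (E ^ m) $ n)"
    using \<open>n \<le> d\<close> startsby_zero_power_prefix[OF E0]
    by (intro sum.mono_neutral_right) auto
  also have "\<dots> = (fps_ginv T E oo E) $ n"
    by (simp add: fps_compose_nth)
  also have "\<dots> = T $ n"
    by (simp only: ginv)
  finally show "(\<Sum>m\<le>d. fps_const (fps_ginv T E $ m) * (fps_exp 1 - 1) ^ m) $ n = T $ n"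
    by (simp add: E_def)
qed

lemma fps_eqI_sums_punctured:
  fixes f G :: "complex fps"
  assumes G: "\<psi> has_fps_expansion G" and "\<rho> > 0"
    and sums: "\<And>u. 0 < norm u \<Longrightarrow> norm u < \<rho> \<Longrightarrow> (\<lambda>k. f $ k * u ^ k) sums \<psi> u"
  shows "f = G"
proof -
  have "summable (\<lambda>k. f $ k * of_real (\<rho> / 2) ^ k)"
    using sums[of "of_real (\<rho> / 2)"] \<open>\<rho> > 0\<close> by (simp add: sums_iff)
  hence rad: "ereal (\<rho> / 2) \<le> fps_conv_radius f"
    using conv_radius_geI[of "fps_nth f" "of_real (\<rho> / 2) :: complex"] \<open>\<rho> > 0\<close>
    by (simp add: fps_conv_radius_def)
  have "eventually (\<lambda>z::complex. z \<in> ball 0 (\<rho> / 2) - {0}) (at 0)"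
    using \<open>\<rho> > 0\<close> by (intro eventually_at_in_open) auto
  hence "eventually (\<lambda>z. eval_fls (fps_to_fls f) z = \<psi> z) (at 0)"
  proof eventually_elim
    case (elim z)
    hence z: "norm z < \<rho> / 2" by simp
    hence "ereal (norm z) < fps_conv_radius f"
      using rad by (auto intro: less_le_trans[of _ "ereal (\<rho> / 2)"])
    moreover have "norm z < \<rho>" using z norm_ge_zero[of z] by linarith
    ultimately show ?case using elim sums[of z] by (simp add: eval_fps_to_fls eval_fps_def sums_iff)
  qed
  hence "\<psi> has_laurent_expansion fps_to_fls f"
    using rad \<open>\<rho> > 0\<close> by (auto simp: has_laurent_expansion_def intro: less_le_trans[OF _ rad])
  from has_laurent_expansion_unique[OF this has_laurent_expansion_fps[OF G]] show ?thesis
    by simp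
qed

lemma polyfun_rev_eq_coeffs:
  fixes c c' :: "nat \<Rightarrow> 'a::{idom,real_normed_div_algebra}"
  assumes "\<And>s. (\<Sum>i\<le>d. c i * s ^ (d - i)) = (\<Sum>i\<le>d. c' i * s ^ (d - i))" and "i \<le> d"
  shows "c i = c' i"
proof -
  have rev: "(\<Sum>i\<le>d. f i * s ^ (d - i)) = (\<Sum>j\<le>d. f (d - j) * s ^ j)" for f and s :: 'a
    by (rule sum.reindex_bij_witness[where i="\<lambda>i. d - i" and j="\<lambda>i. d - i"]) auto
  have "\<forall>j\<le>d. c (d - j) = c' (d - j)"
    using assms(1) by (subst polyfun_eq_coeffs[symmetric]) (simp add: rev)
  thus ?thesis using assms(2) by (metis diff_diff_cancel diff_le_self)
qed

lemma prod_of_nat_diff_eq_choose_fact: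
  assumes "k \<le> m"
  shows "(\<Prod>i<k. of_nat (m - i) :: 'a::field_char_0) = of_nat (m choose k) * fact k"
  using assms by (simp add: binomial_gbinomial gbinomial_mult_fact' atLeast0LessThan of_nat_diff)

section \<open>The substitution z = e^u\<close>

definition expm1_quot :: "complex \<Rightarrow> complex" where
  "expm1_quot = eval_fps (fps_shift 1 (fps_exp 1 - 1))"

lemma fps_conv_radius_exp_minus_1: "fps_conv_radius (fps_exp (1::complex) - 1) = \<infinity>"
  using fps_conv_radius_diff_ge[of "\<infinity>" "fps_exp (1::complex)" 1] by simp

lemma expm1_quot_eq: "expm1_quot u = (if u = 0 then 1 else (exp u - 1) / u)"
proof -
  have "(fps_exp (1::complex) - 1) $ 1 \<noteq> 0"
    by simp
  hence "1 \<le> subdegree (fps_exp (1::complex) - 1)"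
    by (intro subdegree_geI) auto
  thus ?thesis
    unfolding expm1_quot_def
    by (subst eval_fps_shift) (auto simp: fps_conv_radius_exp_minus_1 eval_fps_diff)
qed

lemma exp_minus_1_eq_mult_expm1_quot: "exp u - 1 = u * expm1_quot u"
  by (simp add: expm1_quot_eq)

lemma holomorphic_on_expm1_quot: "expm1_quot holomorphic_on A"
  unfolding expm1_quot_def
  by (intro holomorphic_on_eval_fps) (simp add: fps_conv_radius_exp_minus_1)

lemma expm1_quot_has_fps_expansion: "expm1_quot has_fps_expansion fps_shift 1 (fps_exp 1 - 1)"
  unfolding expm1_quot_def
  by (intro eval_fps_has_fps_expansion) (simp add: fps_conv_radius_exp_minus_1)

lemma exp_pole_removable:
  assumes "r > 0" and h: "h holomorphic_on ball 1 r"
    and pole: "\<And>z. z \<in> ball 1 r - {1} \<Longrightarrow> h z = (z - 1) ^ \<nu> * F z"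
  obtains R where "R > 0"
    "(\<lambda>u. h (exp u) / (- expm1_quot u) ^ \<nu>) holomorphic_on ball 0 R"
    "\<And>u. 0 < norm u \<Longrightarrow> norm u < R \<Longrightarrow> h (exp u) / (- expm1_quot u) ^ \<nu> = (- u) ^ \<nu> * F (exp u)"
proof -
  define S where "S = {u. expm1_quot u \<noteq> 0} \<inter> exp -` ball 1 r"
  have "open S"
    unfolding S_def using holomorphic_on_imp_continuous_on[OF holomorphic_on_expm1_quot]
    by (intro open_Int open_Collect_neq open_vimage continuous_intros) auto
  moreover have "0 \<in> S" using \<open>r > 0\<close> by (simp add: S_def expm1_quot_eq)
  ultimately obtain R where "R > 0" and R: "ball 0 R \<subseteq> S"
    by (meson open_contains_ball)
  show ?thesis
  proof (rule that[OF \<open>R > 0\<close>])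
    have "(h \<circ> exp) holomorphic_on ball 0 R"
      using R by (intro holomorphic_on_compose_gen[OF _ h] holomorphic_intros) (auto simp: S_def)
    thus "(\<lambda>u. h (exp u) / (- expm1_quot u) ^ \<nu>) holomorphic_on ball 0 R"
      using R by (intro holomorphic_intros holomorphic_on_expm1_quot) (auto simp: S_def o_def)
  next
    fix u :: complex assume "0 < norm u" "norm u < R"
    hence "expm1_quot u \<noteq> 0" "exp u \<in> ball 1 r" "exp u \<noteq> 1"
      using R exp_minus_1_eq_mult_expm1_quot[of u] by (auto simp: S_def)
    hence "h (exp u) = (u * expm1_quot u) ^ \<nu> * F (exp u)"
      using pole[of "exp u"] by (simp add: exp_minus_1_eq_mult_expm1_quot)
    also have "(u * expm1_quot u) ^ \<nu> = (- expm1_quot u) ^ \<nu> * (- u) ^ \<nu>"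
      by (simp add: mult.commute flip: power_mult_distrib)
    finally show "h (exp u) / (- expm1_quot u) ^ \<nu> = (- u) ^ \<nu> * F (exp u)"
      using \<open>expm1_quot u \<noteq> 0\<close> by simp
  qed
qed

lemma holomorphic_eq_power_mult_eval_fps_shift:
  fixes \<psi> :: "complex \<Rightarrow> complex"
  assumes holo: "\<psi> holomorphic_on ball 0 R" and zero: "\<And>i. i < \<nu> \<Longrightarrow> fps_expansion \<psi> 0 $ i = 0"
    and "norm u < R"
  shows "\<psi> u = u ^ \<nu> * eval_fps (fps_shift \<nu> (fps_expansion \<psi> 0)) u"
proof -
  define \<Psi> where "\<Psi> = fps_expansion \<psi> 0"
  have split: "\<Psi> = fps_shift \<nu> \<Psi> * fps_X ^ \<nu>"
    by (rule fps_ext) (simp add: fps_X_power_mult_right_nth zero \<Psi>_def)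
  have "ereal R \<le> fps_conv_radius \<Psi>"
    unfolding \<Psi>_def by (rule conv_radius_fps_expansion) (use holo in simp)
  hence rad: "ereal (norm u) < fps_conv_radius \<Psi>"
    using \<open>norm u < R\<close> by (auto intro: less_le_trans[of _ "ereal R"])
  have "R > 0"
    using \<open>norm u < R\<close> norm_ge_zero[of u] by linarith
  have "\<psi> u = eval_fps \<Psi> u"
    using \<open>norm u < R\<close> \<open>R > 0\<close> holo unfolding \<Psi>_def
    by (intro has_fps_expansion_imp_eval_fps_eq[symmetric] has_fps_expansion_fps_expansion) auto
  also have "\<dots> = eval_fps (fps_shift \<nu> \<Psi>) u * u ^ \<nu>"
    using rad by (subst split) (simp add: eval_fps_mult)
  finally show ?thesis by (simp add: \<Psi>_def mult.commute)
qed

lemma eventually_Ln_1_plus_at_0: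
  assumes "\<rho> > 0"
  shows "eventually (\<lambda>w. exp (Ln (1 + w)) = 1 + w \<and> Ln (1 + w) \<noteq> 0 \<and> norm (Ln (1 + w)) < \<rho>)
           (at (0::complex))"
proof -
  have "((\<lambda>w::complex. Ln (1 + w)) \<longlongrightarrow> Ln (1 + 0)) (at 0)"
    by (intro tendsto_intros) auto
  from tendstoD[OF this \<open>\<rho> > 0\<close>]
  have "eventually (\<lambda>w. norm (Ln (1 + w)) < \<rho>) (at (0::complex))"
    by (simp add: dist_norm)
  moreover have "eventually (\<lambda>w. w \<in> ball 0 1 - {0}) (at (0::complex))"
    by (intro eventually_at_in_open) auto
  ultimately show ?thesis
  proof eventually_elim
    case (elim w)
    hence "1 + w \<noteq> 0"
      by (auto simp: add_eq_0_iff)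
    hence "exp (Ln (1 + w)) = 1 + w"
      by simp
    with elim show ?case by auto
  qed
qed

section \<open>Bernoulli polynomials of tame series\<close>

lemma tame_contE:
  assumes "tame_cont a F \<nu>"
  obtains r h where "r > 0" "F holomorphic_on ball 0 1 \<union> (ball 1 r - {1})"
    "h holomorphic_on ball 1 r" "\<And>z. z \<in> ball 1 r - {1} \<Longrightarrow> h z = (z - 1) ^ \<nu> * F z"
proof -
  from assms have "\<exists>r>0. F holomorphic_on ball 0 1 \<union> (ball 1 r - {1}) \<and>
      (\<exists>h. h holomorphic_on ball 1 r \<and> (\<forall>z\<in>ball 1 r - {1}. h z = (z - 1) ^ \<nu> * F z))"
    unfolding tame_cont_def by (elim conjE exE) (intro exI conjI, assumption+)
  with that show ?thesis by blast
qed

lemma tame_exp_pole_removable: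
  assumes "tame_cont a F \<nu>"
  obtains R \<phi> where "R > 0" "\<phi> holomorphic_on ball 0 R"
    "\<And>u. 0 < norm u \<Longrightarrow> norm u < R \<Longrightarrow> \<phi> u = (- u) ^ \<nu> * F (exp u)"
proof -
  obtain r h where r: "r > 0" "h holomorphic_on ball 1 r"
    "\<And>z. z \<in> ball 1 r - {1} \<Longrightarrow> h z = (z - 1) ^ \<nu> * F z"
    using tame_contE[OF assms] by metis
  show ?thesis
  proof (rule exp_pole_removable[OF r])
    fix R assume "R > 0" "(\<lambda>u. h (exp u) / (- expm1_quot u) ^ \<nu>) holomorphic_on ball 0 R"
      "\<And>u. 0 < norm u \<Longrightarrow> norm u < R \<Longrightarrow> h (exp u) / (- expm1_quot u) ^ \<nu> = (- u) ^ \<nu> * F (exp u)"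
    thus thesis by (rule that)
  qed
qed

lemma tame_bernoulli_eq_fps_nth:
  fixes F \<phi> :: "complex \<Rightarrow> complex"
  assumes "R > 0" and holo: "\<phi> holomorphic_on ball 0 R"
    and \<phi>: "\<And>u. 0 < norm u \<Longrightarrow> norm u < R \<Longrightarrow> \<phi> u = (- u) ^ \<mu> * F (exp u)"
  shows "tame_bernoulli F \<mu> k t = fact k * (fps_expansion \<phi> 0 * fps_exp t) $ k"
proof -
  define \<psi> where "\<psi> u = \<phi> u * exp (t * u)" for u
  define \<Psi> where "\<Psi> = fps_expansion \<phi> 0 * fps_exp t"
  have \<Psi>: "\<psi> has_fps_expansion \<Psi>"
    unfolding \<psi>_def[abs_def] \<Psi>_def using \<open>R > 0\<close> holo
    by (intro has_fps_expansion_mult has_fps_expansion_exp has_fps_expansion_fps_expansion) auto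
  have "\<psi> holomorphic_on ball 0 R"
    unfolding \<psi>_def[abs_def] by (intro holomorphic_intros holo)
  hence sums: "(\<lambda>k. \<Psi> $ k * u ^ k) sums \<psi> u" if "norm u < R" for u
    using has_fps_expansion_imp_sums_complex[OF \<Psi>, of "ereal R" u] that by simp
  let ?generates = "\<lambda>B r. r > 0 \<and> (\<forall>u. 0 < norm u \<and> norm u < r \<longrightarrow>
        (\<lambda>k. B k * u ^ k / fact k) sums ((- u) ^ \<mu> * F (exp u) * exp (t * u)))"
  have "?generates (\<lambda>k. fact k * \<Psi> $ k) R"
    using \<open>R > 0\<close> sums by (auto simp: \<psi>_def \<phi>[symmetric])
  moreover have "B = (\<lambda>k. fact k * \<Psi> $ k)" if "?generates B r" for B r
  proof -
    have "Abs_fps (\<lambda>k. B k / fact k) = \<Psi>"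
    proof (rule fps_eqI_sums_punctured[OF \<Psi>, of "min r R"])
      show "min r R > 0" using that \<open>R > 0\<close> by simp
      show "(\<lambda>k. Abs_fps (\<lambda>k. B k / fact k) $ k * u ^ k) sums \<psi> u"
        if "0 < norm u" "norm u < min r R" for u
        using \<open>?generates B r\<close> \<phi>[of u] that by (simp add: \<psi>_def)
    qed
    thus ?thesis by (auto simp: fps_eq_iff field_simps)
  qed
  ultimately have "(THE B. \<exists>r. ?generates B r) = (\<lambda>k. fact k * \<Psi> $ k)"
    by (intro the_equality) blast+
  thus ?thesis by (simp add: tame_bernoulli_def \<Psi>_def)
qed

lemma tame_bernoulli_shift:
  assumes "tame_cont a F \<nu>"
  shows "tame_bernoulli F \<nu> m t =
    (\<Sum>i\<le>m. of_nat (m choose i) * tame_bernoulli F \<nu> i t0 * (t - t0) ^ (m - i))"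
proof -
  obtain R \<phi> where \<phi>: "R > 0" "\<phi> holomorphic_on ball 0 R"
    "\<And>u. 0 < norm u \<Longrightarrow> norm u < R \<Longrightarrow> \<phi> u = (- u) ^ \<nu> * F (exp u)"
    using tame_exp_pole_removable[OF assms] by metis
  have B: "\<And>k t. tame_bernoulli F \<nu> k t = fact k * (fps_expansion \<phi> 0 * fps_exp t) $ k"
    by (rule tame_bernoulli_eq_fps_nth[OF \<phi>])
  show ?thesis unfolding B by (rule fact_fps_mult_exp_nth_shift)
qed

lemma tame_bernoulli_coeffs:
  assumes "tame_cont a F \<nu>"
    and P: "\<And>t. tame_bernoulli F \<nu> d t = (\<Sum>i\<le>d. q i * (t - t0) ^ (d - i))" and "i \<le> d"
  shows "of_nat (d choose i) * tame_bernoulli F \<nu> i t0 = q i"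
proof (rule polyfun_rev_eq_coeffs[OF _ \<open>i \<le> d\<close>])
  fix s
  show "(\<Sum>i\<le>d. of_nat (d choose i) * tame_bernoulli F \<nu> i t0 * s ^ (d - i)) =
        (\<Sum>i\<le>d. q i * s ^ (d - i))"
    using tame_bernoulli_shift[OF assms(1), of d "t0 + s" t0] P[of "t0 + s"] by simp
qed

lemma tame_bernoulli_lower_eqI:
  assumes F: "tame_cont a F \<nu>" and G: "tame_cont b G \<mu>"
    and top: "\<And>t. tame_bernoulli F \<nu> d t = tame_bernoulli G \<mu> d t" and "i \<le> d"
  shows "tame_bernoulli F \<nu> i t0 = tame_bernoulli G \<mu> i t0"
proof -
  have "of_nat (d choose i) * tame_bernoulli F \<nu> i t0 = of_nat (d choose i) * tame_bernoulli G \<mu> i t0"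
    by (rule tame_bernoulli_coeffs[OF F _ \<open>i \<le> d\<close>])
       (simp add: top tame_bernoulli_shift[OF G, of d _ t0])
  thus ?thesis using \<open>i \<le> d\<close> by simp
qed

lemma tame_bernoulli_values:
  assumes F: "tame_cont a F \<mu>"
    and P: "\<And>t. tame_bernoulli F \<mu> (\<nu> - 1) t = (\<Sum>n=1..\<nu>. p n * (t - t0) ^ (n - 1))"
    and n: "n \<in> {1..\<nu>}"
  shows "tame_bernoulli F \<mu> (\<nu> - n) t0 = fact (n - 1) / (\<Prod>k<n - 1. of_nat (\<nu> - 1 - k)) * p n"
proof -
  define d where "d = \<nu> - 1"
  have reindex: "(\<Sum>n=1..\<nu>. p n * s ^ (n - 1)) = (\<Sum>i\<le>d. p (\<nu> - i) * s ^ (d - i))" for s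
    by (rule sum.reindex_bij_witness[where i="\<lambda>i. \<nu> - i" and j="\<lambda>n. \<nu> - n"])
       (use n in \<open>auto simp: d_def\<close>)
  have "\<And>t. tame_bernoulli F \<mu> d t = (\<Sum>i\<le>d. p (\<nu> - i) * (t - t0) ^ (d - i))"
    by (simp only: d_def P reindex[unfolded d_def])
  moreover have "\<nu> - n \<le> d" using n by (auto simp: d_def)
  ultimately have "of_nat (d choose (\<nu> - n)) * tame_bernoulli F \<mu> (\<nu> - n) t0 = p n"
    using tame_bernoulli_coeffs[OF F] n by fastforce
  moreover have "d choose (\<nu> - n) = d choose (n - 1)"
    using n binomial_symmetric[of "n - 1" d] by (auto simp: d_def)
  moreover have "(\<Prod>k<n - 1. of_nat (\<nu> - 1 - k) :: complex) = of_nat (d choose (n - 1)) * fact (n - 1)"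
    unfolding d_def[symmetric] by (rule prod_of_nat_diff_eq_choose_fact) (use n in \<open>auto simp: d_def\<close>)
  moreover have "(of_nat (d choose (n - 1)) :: complex) \<noteq> 0"
    using n by (auto simp: d_def)
  ultimately show ?thesis
    using n by (auto simp: field_simps)
qed

section \<open>Principal parts\<close>

lemma tame_has_laurent_expansion:
  assumes "tame_cont a F \<nu>"
  shows "(\<lambda>w. F (1 + w)) has_laurent_expansion laurent_expansion F 1"
proof -
  obtain r h where "r > 0" and h: "h holomorphic_on ball 1 r"
    and pole: "\<And>z. z \<in> ball 1 r - {1} \<Longrightarrow> h z = (z - 1) ^ \<nu> * F z"
    using tame_contE[OF assms] by metis
  have "h analytic_on {1}"
    using h \<open>r > 0\<close> analytic_at by fastforce
  hence "(\<lambda>w. h (1 + w) / w ^ \<nu>) has_laurent_expansion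
      fps_to_fls (fps_expansion h 1) / fls_X_intpow \<nu>"
    by (intro has_laurent_expansion_divide has_laurent_expansion_fps
        analytic_at_imp_has_fps_expansion has_laurent_expansion_fps_X_power)
  moreover have "eventually (\<lambda>w. w \<in> ball 0 r - {0}) (at (0::complex))"
    using \<open>r > 0\<close> by (intro eventually_at_in_open) auto
  hence "eventually (\<lambda>w. h (1 + w) / w ^ \<nu> = F (1 + w)) (at 0)"
    by eventually_elim (simp add: pole dist_norm)
  ultimately have "(\<lambda>w. F (1 + w)) has_laurent_expansion
      fps_to_fls (fps_expansion h 1) / fls_X_intpow \<nu>"
    by (simp add: has_laurent_expansion_cong)
  with laurent_expansion_eqI[OF this] show ?thesis by simp
qed

lemma principal_part_eqI_analytic_diff:
  assumes "(\<lambda>w. F (1 + w)) has_laurent_expansion laurent_expansion F 1"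
    and "(\<lambda>w. G (1 + w)) has_laurent_expansion laurent_expansion G 1"
    and "K analytic_on {0}" and "eventually (\<lambda>w. F (1 + w) - G (1 + w) = K w) (at 0)"
  shows "principal_part F m = principal_part G m"
proof -
  have "(\<lambda>w. F (1 + w) - G (1 + w)) has_laurent_expansion laurent_expansion F 1 - laurent_expansion G 1"
    using assms(1,2) by (rule has_laurent_expansion_diff)
  moreover have "(\<lambda>w. F (1 + w) - G (1 + w)) has_laurent_expansion fps_to_fls (fps_expansion K 0)"
    using has_laurent_expansion_fps[OF analytic_at_imp_has_fps_expansion_0[OF assms(3)]]
      has_laurent_expansion_cong[OF assms(4) refl] by blast
  ultimately have "laurent_expansion F 1 - laurent_expansion G 1 = fps_to_fls (fps_expansion K 0)"
    by (rule has_laurent_expansion_unique)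
  hence "fls_nth (laurent_expansion F 1 - laurent_expansion G 1) (- int n) = 0" if "n \<ge> 1" for n
    using that by simp
  hence "fls_nth (laurent_expansion F 1) (- int n) = fls_nth (laurent_expansion G 1) (- int n)"
    if "n \<ge> 1" for n
    using that by fastforce
  thus ?thesis
    unfolding principal_part_def by (intro ext sum.cong) auto
qed

lemma exp_substitution_removable:
  fixes \<psi> D :: "complex \<Rightarrow> complex"
  assumes "\<rho> > 0" and holo: "\<psi> holomorphic_on ball 0 \<rho>"
    and zero: "\<And>i. i < \<nu> \<Longrightarrow> fps_expansion \<psi> 0 $ i = 0"
    and \<psi>: "\<And>u. 0 < norm u \<Longrightarrow> norm u < \<rho> \<Longrightarrow> \<psi> u = (- u) ^ \<nu> * D (exp u)"
  obtains K where "K analytic_on {0}" "eventually (\<lambda>w. D (1 + w) = K w) (at 0)"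
proof
  define \<Psi> where "\<Psi> = fps_shift \<nu> (fps_expansion \<psi> 0)"
  have "ereal \<rho> \<le> fps_conv_radius \<Psi>"
    unfolding \<Psi>_def fps_conv_radius_shift by (rule conv_radius_fps_expansion) (use holo in simp)
  thus "(\<lambda>w. (- 1) ^ \<nu> * eval_fps \<Psi> (Ln (1 + w))) analytic_on {0}"
    using \<open>\<rho> > 0\<close> by (intro analytic_intros) (auto intro: less_le_trans[of _ "ereal \<rho>"])
  show "eventually (\<lambda>w. D (1 + w) = (- 1) ^ \<nu> * eval_fps \<Psi> (Ln (1 + w))) (at 0)"
    using eventually_Ln_1_plus_at_0[OF \<open>\<rho> > 0\<close>]
  proof eventually_elim
    case (elim w)
    define u where "u = Ln (1 + w)"
    have u: "exp u = 1 + w" "u \<noteq> 0" "norm u < \<rho>"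
      using elim by (simp_all add: u_def)
    have sign: "X = (- 1) ^ \<nu> * Y" if "(- u) ^ \<nu> * X = u ^ \<nu> * Y" for X Y
      using that u(2) by (auto simp: power_minus[of u] field_simps)
    have "(- u) ^ \<nu> * D (1 + w) = \<psi> u"
      using u \<psi>[of u] by simp
    also have "\<dots> = u ^ \<nu> * eval_fps \<Psi> u"
      unfolding \<Psi>_def by (rule holomorphic_eq_power_mult_eval_fps_shift[OF holo zero u(3)])
    finally show ?case
      unfolding u_def[symmetric] by (rule sign)
  qed
qed

lemma tame_principal_part_eqI:
  assumes F: "tame_cont a F \<nu>" and G: "tame_cont b G \<nu>"
    and B: "\<And>i. i < \<nu> \<Longrightarrow> tame_bernoulli F \<nu> i 0 = tame_bernoulli G \<nu> i 0"
  shows "principal_part F \<nu> = principal_part G \<nu>"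
proof -
  obtain RF \<phi>F where \<phi>F: "RF > 0" "\<phi>F holomorphic_on ball 0 RF"
    "\<And>u. 0 < norm u \<Longrightarrow> norm u < RF \<Longrightarrow> \<phi>F u = (- u) ^ \<nu> * F (exp u)"
    using tame_exp_pole_removable[OF F] by metis
  obtain RG \<phi>G where \<phi>G: "RG > 0" "\<phi>G holomorphic_on ball 0 RG"
    "\<And>u. 0 < norm u \<Longrightarrow> norm u < RG \<Longrightarrow> \<phi>G u = (- u) ^ \<nu> * G (exp u)"
    using tame_exp_pole_removable[OF G] by metis
  define \<psi> where "\<psi> u = \<phi>F u - \<phi>G u" for u
  have "min RF RG > 0" using \<phi>F(1) \<phi>G(1) by simp
  moreover have "\<psi> holomorphic_on ball 0 (min RF RG)"
    unfolding \<psi>_def using \<phi>F(2) \<phi>G(2)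
    by (intro holomorphic_intros) (auto elim: holomorphic_on_subset)
  moreover have "fps_expansion \<psi> 0 $ i = 0" if "i < \<nu>" for i
  proof -
    have "fps_expansion \<psi> 0 = fps_expansion \<phi>F 0 - fps_expansion \<phi>G 0"
      unfolding \<psi>_def using \<phi>F(1,2) \<phi>G(1,2)
      by (intro fps_expansion_eqI has_fps_expansion_diff has_fps_expansion_fps_expansion) auto
    thus ?thesis
      using B[OF that] tame_bernoulli_eq_fps_nth[OF \<phi>F, of i 0] tame_bernoulli_eq_fps_nth[OF \<phi>G, of i 0]
      by simp
  qed
  moreover have "\<psi> u = (- u) ^ \<nu> * (F (exp u) - G (exp u))"
    if "0 < norm u" "norm u < min RF RG" for u
    using that \<phi>F(3)[of u] \<phi>G(3)[of u] by (simp add: \<psi>_def right_diff_distrib)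
  ultimately obtain K where "K analytic_on {0}" "eventually (\<lambda>w. F (1 + w) - G (1 + w) = K w) (at 0)"
    by (rule exp_substitution_removable)
  thus ?thesis
    by (intro principal_part_eqI_analytic_diff tame_has_laurent_expansion[OF F]
        tame_has_laurent_expansion[OF G])
qed

section \<open>Existence\<close>

lemma uniform_limit_finite_subsets_eventually_const:
  assumes "finite S" "S \<subseteq> M"
    and "\<And>Y z. finite Y \<Longrightarrow> S \<subseteq> Y \<Longrightarrow> Y \<subseteq> M \<Longrightarrow> z \<in> U \<Longrightarrow> (\<Sum>i\<in>Y. f i z) = g z"
  shows "uniform_limit U (\<lambda>X z. \<Sum>i\<in>X. f i z) g (finite_subsets_at_top M)"
proof (rule uniform_limitI)
  fix \<epsilon> :: real assume "\<epsilon> > 0"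
  thus "\<forall>\<^sub>F X in finite_subsets_at_top M. \<forall>z\<in>U. dist (\<Sum>i\<in>X. f i z) (g z) < \<epsilon>"
    unfolding eventually_finite_subsets_at_top using assms by (intro exI[of _ S]) simp
qed

lemma multi_term_polynomial_at_1:
  fixes c :: "nat \<Rightarrow> complex" and d :: nat
  defines "cc \<equiv> \<lambda>i. if i 0 \<le> d then c (i 0) else 0"
  shows "(\<lambda>i. norm (multi_term 1 (\<lambda>_. 1) cc i z)) summable_on multi_index_set 1"
    and "uniform_limit U (\<lambda>X z. \<Sum>i\<in>X. multi_term 1 (\<lambda>_. 1) cc i z)
           (\<lambda>z. \<Sum>m\<le>d. c m * (z - 1) ^ m) (finite_subsets_at_top (multi_index_set 1))"
proof -
  define M where "M = multi_index_set 1"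
  define \<iota> where "\<iota> m = (\<lambda>j::nat. if j = 0 then m else 0)" for m :: nat
  define S where "S = \<iota> ` {..d}"
  have term_eq: "multi_term 1 (\<lambda>_. 1) cc i z = cc i * (z - 1) ^ i 0" for i z
    by (simp add: multi_term_def)
  have "finite S" "S \<subseteq> M"
    by (auto simp: S_def M_def multi_index_set_def \<iota>_def)
  have outside: "multi_term 1 (\<lambda>_. 1) cc i z = 0" if "i \<in> M" "i \<notin> S" for i z
  proof -
    have "i = \<iota> (i 0)"
      using that(1) by (auto simp: M_def multi_index_set_def \<iota>_def fun_eq_iff)
    hence "cc i = 0"
      using that(2) by (auto simp: cc_def S_def split: if_splits)
    thus ?thesis by (simp only: term_eq mult_zero_left)
  qed
  have sum_eq: "(\<Sum>i\<in>Y. multi_term 1 (\<lambda>_. 1) cc i z) = (\<Sum>m\<le>d. c m * (z - 1) ^ m)"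
    if "finite Y" "S \<subseteq> Y" "Y \<subseteq> M" for Y z
  proof -
    have "inj_on \<iota> {..d}" by (auto simp: inj_on_def \<iota>_def fun_eq_iff)
    have "(\<Sum>i\<in>Y. multi_term 1 (\<lambda>_. 1) cc i z) = (\<Sum>i\<in>S. multi_term 1 (\<lambda>_. 1) cc i z)"
      using that outside by (intro sum.mono_neutral_right) auto
    also have "\<dots> = (\<Sum>m\<le>d. multi_term 1 (\<lambda>_. 1) cc (\<iota> m) z)"
      unfolding S_def by (rule sum.reindex[OF \<open>inj_on \<iota> {..d}\<close>, unfolded o_def])
    also have "\<dots> = (\<Sum>m\<le>d. c m * (z - 1) ^ m)"
      by (simp add: multi_term_def cc_def \<iota>_def)
    finally show ?thesis .
  qed
  have "{i \<in> M. norm (multi_term 1 (\<lambda>_. 1) cc i z) \<noteq> 0} \<subseteq> S"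
    using outside by auto
  thus "(\<lambda>i. norm (multi_term 1 (\<lambda>_. 1) cc i z)) summable_on multi_index_set 1"
    unfolding M_def[symmetric]
    by (intro finite_nonzero_values_imp_summable_on finite_subset[OF _ \<open>finite S\<close>])
  show "uniform_limit U (\<lambda>X z. \<Sum>i\<in>X. multi_term 1 (\<lambda>_. 1) cc i z)
           (\<lambda>z. \<Sum>m\<le>d. c m * (z - 1) ^ m) (finite_subsets_at_top (multi_index_set 1))"
    unfolding M_def[symmetric] using \<open>finite S\<close> \<open>S \<subseteq> M\<close> sum_eq
    by (rule uniform_limit_finite_subsets_eventually_const)
qed

lemma of_real_Ioc_0_1_subset_ball_1: "complex_of_real ` {0<..1} \<subseteq> ball 1 1"
proof
  fix z assume "z \<in> complex_of_real ` {0<..1}"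
  then obtain x where "z = of_real x" "0 < x" "x \<le> 1" by auto
  hence "dist 1 z = norm (complex_of_real (1 - x))"
    by (simp add: dist_norm)
  also have "\<dots> = 1 - x"
    using \<open>x \<le> 1\<close> by (simp only: norm_of_real)
  finally show "z \<in> ball 1 1" using \<open>0 < x\<close> by simp
qed

lemma tame_cont_polynomial_div_pole:
  fixes c :: "nat \<Rightarrow> complex" and d \<nu> :: nat
  defines "F \<equiv> \<lambda>z. (\<Sum>m\<le>d. c m * (z - 1) ^ m) / (z - 1) ^ \<nu>"
  assumes "\<nu> > 0 \<Longrightarrow> c 0 \<noteq> 0"
  shows "tame_cont (\<lambda>n. fps_expansion F 0 $ n) F \<nu>"
proof -
  define q where "q z = (\<Sum>m\<le>d. c m * (z - 1) ^ m)" for z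
  define cc where "cc = (\<lambda>i::nat \<Rightarrow> nat. if i 0 \<le> d then c (i 0) else 0)"
  define U where "U = ball (0::complex) 1 \<union> ball 1 1"
  have holo: "F holomorphic_on A" if "1 \<notin> A" for A
    unfolding F_def using that by (intro holomorphic_intros) auto
  have "F holomorphic_on ball 0 1"
    by (rule holo) simp
  hence sums: "(\<lambda>n. fps_expansion F 0 $ n * z ^ n) sums F z" if "norm z < 1" for z
    using has_fps_expansion_imp_sums_complex[OF has_fps_expansion_fps_expansion, of "ball 0 1" F 1 z]
      that by (simp add: one_ereal_def)
  have "q 1 = c 0"
    by (cases d) (simp_all add: q_def sum.atMost_Suc_shift)
  have target: "(\<lambda>z. if z = 1 then q 1 else (z - 1) ^ \<nu> * F z) = q"
    by (auto simp: F_def q_def)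
  have "F holomorphic_on ball 0 1 \<union> (ball 1 1 - {1})"
    by (rule holo) simp
  moreover have "q holomorphic_on ball 1 1"
    unfolding q_def by (intro holomorphic_intros)
  moreover have "\<forall>z\<in>ball 1 1 - {1}. q z = (z - 1) ^ \<nu> * F z"
    by (simp add: F_def q_def)
  moreover have "\<nu> > 0 \<longrightarrow> q 1 \<noteq> 0"
    using assms(2) \<open>q 1 = c 0\<close> by simp
  moreover have "open U" "U \<subseteq> ball 0 1 \<union> ball 1 1"
    by (auto simp: U_def)
  moreover have "complex_of_real ` {0<..1} \<subseteq> U"
    using of_real_Ioc_0_1_subset_ball_1 by (auto simp: U_def)
  moreover have "\<forall>z\<in>U. (\<lambda>i. norm (multi_term 1 (\<lambda>_. 1) cc i z)) summable_on multi_index_set 1"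
    unfolding cc_def by (blast intro: multi_term_polynomial_at_1(1))
  moreover have "uniform_limit U (\<lambda>X z. \<Sum>i\<in>X. multi_term 1 (\<lambda>_. 1) cc i z)
      (\<lambda>z. if z = 1 then q 1 else (z - 1) ^ \<nu> * F z) (finite_subsets_at_top (multi_index_set 1))"
    unfolding target unfolding q_def cc_def by (rule multi_term_polynomial_at_1(2))
  ultimately show ?thesis
    unfolding tame_cont_def using sums
    by (intro conjI allI impI exI[of _ "1::real"] exI[of _ q] exI[of _ U] exI[of _ "1::nat"]
        exI[of _ "\<lambda>_::nat. 1::nat"] exI[of _ cc]) (simp_all add: sums_iff)
qed

lemma tame_bernoulli_polynomial_div_pole:
  fixes c :: "nat \<Rightarrow> complex" and d \<nu> :: nat
  shows "tame_bernoulli (\<lambda>z. (\<Sum>m\<le>d. c m * (z - 1) ^ m) / (z - 1) ^ \<nu>) \<nu> k t =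
    fact k * ((\<Sum>m\<le>d. fps_const (c m) * (fps_exp 1 - 1) ^ m)
      / (- fps_shift 1 (fps_exp 1 - 1)) ^ \<nu> * fps_exp t) $ k"
proof -
  define q where "q z = (\<Sum>m\<le>d. c m * (z - 1) ^ m)" for z
  have "q holomorphic_on ball 1 1"
    unfolding q_def by (intro holomorphic_intros)
  obtain R where R: "R > 0" "(\<lambda>u. q (exp u) / (- expm1_quot u) ^ \<nu>) holomorphic_on ball 0 R"
    "\<And>u. 0 < norm u \<Longrightarrow> norm u < R \<Longrightarrow>
       q (exp u) / (- expm1_quot u) ^ \<nu> = (- u) ^ \<nu> * (q (exp u) / (exp u - 1) ^ \<nu>)"
    by (rule exp_pole_removable[where F="\<lambda>z. q z / (z - 1) ^ \<nu>", OF _ \<open>q holomorphic_on ball 1 1\<close>])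
       auto
  have "(\<lambda>u. q (exp u)) has_fps_expansion (\<Sum>m\<le>d. fps_const (c m) * (fps_exp 1 - 1) ^ m)"
    unfolding q_def by (intro fps_expansion_intros)
  hence "(\<lambda>u. q (exp u) / (- expm1_quot u) ^ \<nu>) has_fps_expansion
      (\<Sum>m\<le>d. fps_const (c m) * (fps_exp 1 - 1) ^ m) / (- fps_shift 1 (fps_exp 1 - 1)) ^ \<nu>"
    by (intro has_fps_expansion_divide' has_fps_expansion_power has_fps_expansion_minus
        expm1_quot_has_fps_expansion) (simp_all add: fps_power_zeroth)
  from tame_bernoulli_eq_fps_nth[OF R] fps_expansion_eqI[OF this] show ?thesis
    by (simp add: q_def)
qed

lemma tame_bernoulli_exists:
  fixes p :: "nat \<Rightarrow> complex" and t0 :: complex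
  assumes "\<nu> \<ge> 1" and "p \<nu> \<noteq> 0"
  shows "\<exists>a F. tame_cont a F \<nu> \<and>
    (\<forall>t. tame_bernoulli F \<nu> (\<nu> - 1) t = (\<Sum>n=1..\<nu>. p n * (t - t0) ^ (n - 1)))"
proof -
  define d where "d = \<nu> - 1"
  define W where "W = (- fps_shift 1 (fps_exp 1 - 1 :: complex fps)) ^ \<nu>"
  \<comment> \<open>\<open>fact i * A $ i\<close> is the value of \<open>B[i;t0]\<close> forced by \<open>tame_bernoulli_coeffs\<close>, and
    \<open>Q / W\<close> will be the Taylor expansion of \<open>(-u)^\<nu> F(e^u)\<close>.\<close>
  define A where "A = Abs_fps (\<lambda>i. p (\<nu> - i) / (of_nat (d choose i) * fact i))"
  obtain c where c: "\<And>n. n \<le> d \<Longrightarrow>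
      (\<Sum>m\<le>d. fps_const (c m) * (fps_exp 1 - 1) ^ m) $ n = (A * fps_exp (- t0) * W) $ n"
    using fps_exp_minus_1_poly_prefix by blast
  define Q where "Q = (\<Sum>m\<le>d. fps_const (c m) * (fps_exp 1 - 1 :: complex fps) ^ m)"
  define F where "F z = (\<Sum>m\<le>d. c m * (z - 1) ^ m) / (z - 1) ^ \<nu>" for z
  have "W $ 0 = (- 1) ^ \<nu>" by (simp add: W_def fps_power_zeroth)
  have "c 0 = Q $ 0"
    by (cases d) (simp_all add: Q_def fps_sum_nth fps_power_zeroth sum.atMost_Suc_shift)
  also have "\<dots> = (- 1) ^ \<nu> * p \<nu>"
    using c[of 0] \<open>W $ 0 = (- 1) ^ \<nu>\<close> by (simp add: Q_def A_def)
  finally have "c 0 \<noteq> 0"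
    using \<open>p \<nu> \<noteq> 0\<close> by simp
  hence "tame_cont (\<lambda>n. fps_expansion F 0 $ n) F \<nu>"
    unfolding F_def[abs_def] by (rule tame_cont_polynomial_div_pole)
  moreover have "(Q / W * fps_exp t0) $ i = A $ i" if "i \<le> d" for i
  proof -
    have "(Q / W * fps_exp t0) $ i = (A * fps_exp (- t0) * fps_exp t0) $ i"
      using that c \<open>W $ 0 = (- 1) ^ \<nu>\<close>
      by (intro fps_mult_nth_cong_prefix fps_divide_nth_prefix) (auto simp: Q_def)
    thus ?thesis by (simp add: mult.assoc flip: fps_exp_add_mult)
  qed
  hence "tame_bernoulli F \<nu> d t = (\<Sum>n=1..\<nu>. p n * (t - t0) ^ (n - 1))" for t
  proof -
    have "tame_bernoulli F \<nu> d t = fact d * (Q / W * fps_exp t) $ d"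
      unfolding F_def[abs_def] tame_bernoulli_polynomial_div_pole by (simp add: Q_def W_def)
    also have "\<dots> = (\<Sum>i\<le>d. of_nat (d choose i) * (fact i * (Q / W * fps_exp t0) $ i) * (t - t0) ^ (d - i))"
      by (rule fact_fps_mult_exp_nth_shift)
    also have "\<dots> = (\<Sum>i\<le>d. p (\<nu> - i) * (t - t0) ^ (d - i))"
      using \<open>\<And>i. i \<le> d \<Longrightarrow> _ = A $ i\<close> by (intro sum.cong refl) (simp add: A_def)
    also have "\<dots> = (\<Sum>n=1..\<nu>. p n * (t - t0) ^ (n - 1))"
      by (rule sum.reindex_bij_witness[where i="\<lambda>n. \<nu> - n" and j="\<lambda>i. \<nu> - i"])
         (use \<open>\<nu> \<ge> 1\<close> in \<open>auto simp: d_def\<close>)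
    finally show ?thesis .
  qed
  ultimately show ?thesis
    unfolding d_def by blast
qed

theorem mainTheorem6:
  fixes t0 :: real and \<nu> :: nat and p :: "nat \<Rightarrow> complex" and P :: "complex \<Rightarrow> complex"
  assumes "t0 > 0" and "\<nu> \<ge> 1" and "p \<nu> \<noteq> 0"
    and P_def: "\<And>t. P t = (\<Sum>n=1..\<nu>. p n * (t - complex_of_real t0) ^ (n - 1))"
  shows "(\<exists>a F \<mu>. tame_cont a F \<mu> \<and> (\<forall>t. tame_bernoulli F \<mu> (\<nu> - 1) t = P t))
    \<and> (\<forall>a F b G. tame_cont a F \<nu> \<and> (\<forall>t. tame_bernoulli F \<nu> (\<nu> - 1) t = P t)
          \<and> tame_cont b G \<nu> \<and> (\<forall>t. tame_bernoulli G \<nu> (\<nu> - 1) t = P t)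
          \<longrightarrow> principal_part F \<nu> = principal_part G \<nu>)
    \<and> (\<forall>a F. tame_cont a F \<nu> \<and> (\<forall>t. tame_bernoulli F \<nu> (\<nu> - 1) t = P t)
          \<longrightarrow> (\<forall>n\<in>{1..\<nu>}. tame_bernoulli F \<nu> (\<nu> - n) (complex_of_real t0)
                = fact (n - 1) / (\<Prod>k<n - 1. of_nat (\<nu> - 1 - k)) * p n))"
proof (intro conjI allI impI ballI)
  show "\<exists>a F \<mu>. tame_cont a F \<mu> \<and> (\<forall>t. tame_bernoulli F \<mu> (\<nu> - 1) t = P t)"
    using tame_bernoulli_exists[of \<nu> p "complex_of_real t0"] assms(2,3) by (auto simp: P_def)
next
  fix a F b G
  assume "tame_cont a F \<nu> \<and> (\<forall>t. tame_bernoulli F \<nu> (\<nu> - 1) t = P t)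
    \<and> tame_cont b G \<nu> \<and> (\<forall>t. tame_bernoulli G \<nu> (\<nu> - 1) t = P t)"
  hence F: "tame_cont a F \<nu>" and G: "tame_cont b G \<nu>"
    and top: "\<And>t. tame_bernoulli F \<nu> (\<nu> - 1) t = tame_bernoulli G \<nu> (\<nu> - 1) t"
    by simp_all
  show "principal_part F \<nu> = principal_part G \<nu>"
    by (rule tame_principal_part_eqI[OF F G], rule tame_bernoulli_lower_eqI[OF F G top]) simp
next
  fix a F n
  assume "tame_cont a F \<nu> \<and> (\<forall>t. tame_bernoulli F \<nu> (\<nu> - 1) t = P t)" and "n \<in> {1..\<nu>}"
  thus "tame_bernoulli F \<nu> (\<nu> - n) (complex_of_real t0)
      = fact (n - 1) / (\<Prod>k<n - 1. of_nat (\<nu> - 1 - k)) * p n"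
    using tame_bernoulli_values[of a F \<nu> \<nu> p "complex_of_real t0" n] by (simp add: P_def)
qed

end
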